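(* For all integers $m,n\ge1$, every $\Psi:\mathbb{Z}^n\to\mathbb{R}_{>0}$ and each $\circ\in\{\ ,\ ',\ ''\}$, the set $\mathcal{W}^\circ_{n,m}(\Psi)=\bigcap_{k=1}^\infty\mathcal{A}^\circ_{n,m}(k^{-1}\Psi)$ has the same Lebesgue measure as $\mathcal{A}^\circ_{n,m}(\Psi)$.
   Context: Let $m,n\ge1$ be integers. Points $\mathbf{X}\in[0,1]^{nm}$ are regarded as real $n\times m$ matrices, $\mathbf{q}\in\mathbb{Z}^n$ as a row vector, so $\mathbf{q}\mathbf{X}\in\mathbb{R}^m$; $|\cdot|$ denotes the supremum norm on $\mathbb{R}^m$. For $\Psi:\mathbb{Z}^n\to\mathbb{R}_{>0}$ consider the inequality ( * ) $|\mathbf{q}\mathbf{X}+\mathbf{p}|<\Psi(\mathbf{q})$, with $\mathbf{p}=(p_1,\dots,p_m)\in\mathbb{Z}^m$, $\mathbf{q}\in\mathbb{Z}^n\setminus\{\mathbf{0}\}$. $\mathcal{A}_{n,m}(\Psi)$ is the set of $\mathbf{X}\in[0,1]^{nm}$ for which ( * ) holds for infinitely many pairs $(\mathbf{p},\mathbf{q})$; $\mathcal{A}'_{n,m}(\Psi)$ is the set of $\mathbf{X}\in[0,1]^{nm}$ for which ( * ) holds for infinitely many $(\mathbf{p},\mathbf{q})$ with $\gcd(\mathbf{p},\mathbf{q})=1$ (the gcd of all components of $\mathbf{p}$ and $\mathbf{q}$); $\mathcal{A}''_{n,m}(\Psi)$ is the set of $\mathbf{X}\in[0,1]^{nm}$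 for which ( * ) holds for infinitely many $(\mathbf{p},\mathbf{q})$ with $\gcd(p_j,\mathbf{q})=1$ for every $j=1,\dots,m$. $\mathcal{A}^\circ_{n,m}$ denotes any one of $\mathcal{A}_{n,m},\mathcal{A}'_{n,m},\mathcal{A}''_{n,m}$, and $k^{-1}\Psi$ is the function $\mathbf{q}\mapsto \Psi(\mathbf{q})/k$. *)

theory Defs
  imports "HOL-Analysis.Analysis"
begin

datatype approx_kind = Plain | Coprime_All | Coprime_Each

text \<open>Matrices X in R^{n x m} are of type real^'m^'n (row index 'n, column index 'm);
  q :: int^'n is a row vector, p :: int^'m.\<close>

definition coprime_cond :: "approx_kind \<Rightarrow> int^'m \<Rightarrow> int^'n \<Rightarrow> bool" where
  "coprime_cond k p q = (case k of
      Plain \<Rightarrow> True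
    | Coprime_All \<Rightarrow> Gcd (range (\<lambda>j. p $ j) \<union> range (\<lambda>i. q $ i)) = 1
    | Coprime_Each \<Rightarrow> (\<forall>j. Gcd (insert (p $ j) (range (\<lambda>i. q $ i))) = 1))"

definition approx_ineq :: "(int^'n \<Rightarrow> real) \<Rightarrow> real^'m^'n \<Rightarrow> int^'m \<Rightarrow> int^'n \<Rightarrow> bool" where
  "approx_ineq \<Psi> X p q =
     ((MAX j\<in>UNIV. \<bar>(\<Sum>i\<in>UNIV. of_int (q $ i) * X $ i $ j) + of_int (p $ j)\<bar>) < \<Psi> q)"

definition unit_cube :: "(real^'m^'n) set" where
  "unit_cube = {X. \<forall>i j. 0 \<le> X $ i $ j \<and> X $ i $ j \<le> 1}"

definition approx_set :: "approx_kind \<Rightarrow> (int^'n \<Rightarrow> real) \<Rightarrow> (real^'m^'n) set" where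
  "approx_set k \<Psi> = {X \<in> unit_cube.
      infinite {(p, q). q \<noteq> 0 \<and> coprime_cond k p q \<and> approx_ineq \<Psi> X p q}}"

end

theory Submission
  imports Defs
begin

(*
  As W is contained in A_k(Psi), it suffices that A_k(Psi) - A_k(Psi/l) is null for each l.
  This difference is the countable union over N of the pieces E_N consisting of its points
  whose admissible Psi/l-approximations all have height |q| <= N.  Each E_N is porous: near
  x in E_N an approximation (p,q) of x of height > N with Psi(q)/|q| small yields a ball,
  of size comparable to its distance from x, on which (p,q) is a Psi/l-approximation, so the
  ball misses E_N.  Such (p,q) exist, for otherwise Psi(q) >= delta |q| for q of arbitrarily
  large height, and an elementary sieve (long intervals contain integers coprime to a given d)
  then makes every point of the unit cube lie in A_k(Psi/l).  Porous measurable sets are null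
  by the Vitali covering theorem.
*)

definition lin_form :: "real^'m^'n \<Rightarrow> int^'m \<Rightarrow> int^'n \<Rightarrow> 'm \<Rightarrow> real" where
  "lin_form X p q j = (\<Sum>i\<in>UNIV. of_int (q $ i) * X $ i $ j) + of_int (p $ j)"

definition qheight :: "int^'n \<Rightarrow> real" where
  "qheight q = (MAX i\<in>UNIV. \<bar>real_of_int (q $ i)\<bar>)"

definition admissible :: "approx_kind \<Rightarrow> int^'m \<Rightarrow> int^'n \<Rightarrow> bool" where
  "admissible k p q \<longleftrightarrow> q \<noteq> 0 \<and> coprime_cond k p q"

lemma approx_set_admissible:
  "approx_set k \<Psi> = {X \<in> unit_cube. infinite {(p, q). admissible k p q \<and> approx_ineq \<Psi> X p q}}"
  by (simp add: approx_set_def admissible_def conj_assoc)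

lemma approx_ineq_iff: "approx_ineq \<Psi> X p q \<longleftrightarrow> (\<forall>j. \<bar>lin_form X p q j\<bar> < \<Psi> q)"
  by (simp add: approx_ineq_def lin_form_def)

lemma qheight_ge: "\<bar>real_of_int (q $ i)\<bar> \<le> qheight q"
  unfolding qheight_def by (rule Max_ge) auto

lemma qheight_attained: "\<exists>i. \<bar>real_of_int (q $ i)\<bar> = qheight q"
proof -
  have "qheight q \<in> (\<lambda>i. \<bar>real_of_int (q $ i)\<bar>) ` UNIV"
    unfolding qheight_def by (rule Max_in) auto
  then show ?thesis by auto
qed

lemma qheight_pos: "q \<noteq> 0 \<Longrightarrow> qheight q > 0"
proof -
  assume "q \<noteq> 0"
  then obtain i where "q $ i \<noteq> 0" by (metis vec_eq_iff zero_index)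
  then show ?thesis using qheight_ge[of q i] by linarith
qed

lemma Gcd_entries_le_qheight:
  assumes "q \<noteq> 0"
  shows "0 < Gcd (range (\<lambda>i. q $ i)) \<and> real_of_int (Gcd (range (\<lambda>i. q $ i))) \<le> qheight q"
proof -
  define d where "d = Gcd (range (\<lambda>i. q $ i))"
  obtain i where i: "q $ i \<noteq> 0" using assms by (metis vec_eq_iff zero_index)
  have "d \<noteq> 0" unfolding d_def using i by auto
  then have "d > 0" unfolding d_def by (simp add: order_less_le)
  moreover have "d dvd q $ i" unfolding d_def by (rule Gcd_dvd) auto
  then have "\<bar>d\<bar> \<le> \<bar>q $ i\<bar>" using dvd_imp_le_int[OF i] by blast
  ultimately show ?thesis unfolding d_def[symmetric] using qheight_ge[of q i]
    by (metis abs_of_pos of_int_abs of_int_le_iff order_trans)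
qed

lemma finite_bounded_int_vectors: "finite {v::int^'k. \<forall>i. \<bar>real_of_int (v $ i)\<bar> \<le> R}"
proof -
  let ?M = "\<lceil>R\<rceil>"
  have "{v::int^'k. \<forall>i. \<bar>real_of_int (v $ i)\<bar> \<le> R} \<subseteq> vec_lambda ` (PiE UNIV (\<lambda>_. {-?M..?M}))"
  proof
    fix v :: "int^'k" assume v: "v \<in> {v. \<forall>i. \<bar>real_of_int (v $ i)\<bar> \<le> R}"
    have "real_of_int \<bar>v $ i\<bar> \<le> of_int ?M" for i
      using v le_of_int_ceiling[of R] by (simp only: mem_Collect_eq of_int_abs) (meson order_trans)
    then have "\<bar>v $ i\<bar> \<le> ?M" for i by (simp only: of_int_le_iff)
    then have "(\<lambda>i. v $ i) \<in> PiE UNIV (\<lambda>_. {-?M..?M})"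
      by (auto simp: abs_le_iff) (metis minus_le_iff)
    then show "v \<in> vec_lambda ` (PiE UNIV (\<lambda>_. {-?M..?M}))"
      by (metis image_eqI vec_lambda_eta)
  qed
  moreover have "finite (PiE (UNIV::'k set) (\<lambda>_. {-?M..?M}))" by (intro finite_PiE) auto
  ultimately show ?thesis by (meson finite_imageI finite_subset)
qed

text \<open>For fixed X only finitely many pairs of bounded height satisfy the inequality, since
  then p is confined to a box around -qX.\<close>
lemma finite_low_height_solutions:
  fixes \<Psi> :: "int^'n \<Rightarrow> real" and X :: "real^'m^'n"
  shows "finite {(p, q). approx_ineq \<Psi> X p q \<and> qheight q \<le> B}"
proof -
  define R where "R q = \<Psi> q + (\<Sum>j\<in>UNIV. \<Sum>i\<in>UNIV. \<bar>real_of_int (q $ i)\<bar> * \<bar>X $ i $ j\<bar>)"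
    for q :: "int^'n"
  define Qs where "Qs = {q::int^'n. \<forall>i. \<bar>real_of_int (q $ i)\<bar> \<le> B}"
  define Box where "Box = (\<Union>q\<in>Qs. (\<lambda>p. (p, q)) ` {p::int^'m. \<forall>j. \<bar>real_of_int (p $ j)\<bar> \<le> R q})"
  have "{(p, q). approx_ineq \<Psi> X p q \<and> qheight q \<le> B} \<subseteq> Box"
  proof clarify
    fix p :: "int^'m" and q :: "int^'n"
    assume a: "approx_ineq \<Psi> X p q" "qheight q \<le> B"
    have "q \<in> Qs" unfolding Qs_def using a(2) qheight_ge order_trans by blast
    moreover have "\<bar>real_of_int (p $ j)\<bar> \<le> R q" for j
    proof -
      have h: "\<bar>lin_form X p q j\<bar> < \<Psi> q" using a(1) approx_ineq_iff by blast
      have "\<bar>\<Sum>i\<in>UNIV. of_int (q $ i) * X $ i $ j\<bar> \<le> (\<Sum>i\<in>UNIV. \<bar>real_of_int (q $ i)\<bar> * \<bar>X $ i $ j\<bar>)"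
        by (rule order_trans[OF sum_abs]) (simp add: abs_mult)
      also have "\<dots> \<le> (\<Sum>j\<in>UNIV. \<Sum>i\<in>UNIV. \<bar>real_of_int (q $ i)\<bar> * \<bar>X $ i $ j\<bar>)"
        by (rule member_le_sum) (auto intro: sum_nonneg)
      finally show ?thesis using h unfolding R_def lin_form_def by linarith
    qed
    ultimately show "(p, q) \<in> Box" unfolding Box_def by blast
  qed
  moreover have "finite Box"
    unfolding Box_def Qs_def by (intro finite_UN_I finite_bounded_int_vectors finite_imageI)
  ultimately show ?thesis by (rule finite_subset)
qed

lemma infinite_iff_unbounded_height:
  "infinite {(p, q). P p q \<and> approx_ineq \<Psi> X p q}
     \<longleftrightarrow> (\<forall>B::nat. \<exists>p q. P p q \<and> approx_ineq \<Psi> X p q \<and> real B < qheight q)"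
proof
  assume inf: "infinite {(p, q). P p q \<and> approx_ineq \<Psi> X p q}"
  show "\<forall>B::nat. \<exists>p q. P p q \<and> approx_ineq \<Psi> X p q \<and> real B < qheight q"
  proof (rule allI, rule ccontr)
    fix B :: nat
    assume "\<not> (\<exists>p q. P p q \<and> approx_ineq \<Psi> X p q \<and> real B < qheight q)"
    then have "{(p, q). P p q \<and> approx_ineq \<Psi> X p q}
        \<subseteq> {(p, q). approx_ineq \<Psi> X p q \<and> qheight q \<le> real B}"
      by (auto simp: not_less)
    from finite_subset[OF this finite_low_height_solutions] inf show False by simp
  qed
next
  assume unb: "\<forall>B::nat. \<exists>p q. P p q \<and> approx_ineq \<Psi> X p q \<and> real B < qheight q"
  show "infinite {(p, q). P p q \<and> approx_ineq \<Psi> X p q}"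
  proof
    assume fin: "finite {(p, q). P p q \<and> approx_ineq \<Psi> X p q}"
    define H where "H = (\<lambda>(p, q). qheight q) ` {(p, q). P p q \<and> approx_ineq \<Psi> X p q}"
    obtain B :: nat where B: "Max (insert 0 H) \<le> real B" using real_arch_simple by blast
    obtain p q where pq: "P p q" "approx_ineq \<Psi> X p q" "real B < qheight q" using unb by blast
    have "qheight q \<in> H" unfolding H_def using pq by force
    then have "qheight q \<le> Max (insert 0 H)" using fin unfolding H_def by (intro Max_ge) auto
    with B pq(3) show False by linarith
  qed
qed

lemma approx_set_unbounded:
  "approx_set k \<Psi> = {X \<in> unit_cube.
      \<forall>B::nat. \<exists>p q. admissible k p q \<and> approx_ineq \<Psi> X p q \<and> real B < qheight q}"
  unfolding approx_set_admissible infinite_iff_unbounded_height ..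

section \<open>Measurability\<close>

lemma open_sets_lebesgue: "open S \<Longrightarrow> S \<in> sets lebesgue"
  by (metis borel_open sets_completionI_sets sets_lborel)

lemma closed_sets_lebesgue: "closed S \<Longrightarrow> S \<in> sets lebesgue"
  by (metis borel_closed sets_completionI_sets sets_lborel)

text \<open>For fixed (p,q) the inequality is strict in continuous functions of X, hence open.\<close>
lemma open_approx_ineq: "open {X::real^'m^'n. approx_ineq \<Psi> X p q}"
proof -
  have eq: "{X::real^'m^'n. approx_ineq \<Psi> X p q} = (\<Inter>j. {X. \<bar>lin_form X p q j\<bar> < \<Psi> q})"
    by (auto simp: approx_ineq_iff)
  have "open {X::real^'m^'n. \<bar>lin_form X p q j\<bar> < \<Psi> q}" for j
    unfolding lin_form_def by (intro open_Collect_less continuous_intros)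
  then show ?thesis unfolding eq by (intro open_INT) auto
qed

lemma closed_unit_cube: "closed (unit_cube :: (real^'m^'n) set)"
proof -
  have eq: "(unit_cube :: (real^'m^'n) set)
      = (\<Inter>i. \<Inter>j. {X. 0 \<le> X $ i $ j} \<inter> {X. X $ i $ j \<le> 1})"
    by (auto simp: unit_cube_def)
  have "closed {X::real^'m^'n. 0 \<le> X $ i $ j}" "closed {X::real^'m^'n. X $ i $ j \<le> 1}" for i j
    by (intro closed_Collect_le continuous_intros)+
  then show ?thesis unfolding eq by (intro closed_INT ballI closed_Int) auto
qed

lemma norm_le_sum_abs_entries: "norm (X::real^'m^'n) \<le> (\<Sum>i\<in>UNIV. \<Sum>j\<in>UNIV. \<bar>X $ i $ j\<bar>)"
proof -
  have "norm X \<le> (\<Sum>i\<in>UNIV. norm (X $ i))"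
    unfolding norm_vec_def by (rule L2_set_le_sum) auto
  also have "\<dots> \<le> (\<Sum>i\<in>UNIV. \<Sum>j\<in>UNIV. \<bar>X $ i $ j\<bar>)"
    by (intro sum_mono norm_le_l1_cart)
  finally show ?thesis .
qed

lemma entry_le_norm: "\<bar>(X::real^'m^'n) $ i $ j\<bar> \<le> norm X"
  using component_le_norm_cart[of "X $ i" j] Finite_Cartesian_Product.norm_nth_le[of X i] by linarith

lemma bounded_unit_cube: "bounded (unit_cube :: (real^'m^'n) set)"
proof -
  have "norm X \<le> real CARD('n) * real CARD('m)" if "X \<in> unit_cube" for X :: "real^'m^'n"
  proof -
    have "norm X \<le> (\<Sum>i\<in>UNIV. \<Sum>j\<in>UNIV. \<bar>X $ i $ j\<bar>)" by (rule norm_le_sum_abs_entries)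
    also have "\<dots> \<le> (\<Sum>i\<in>(UNIV::'n set). \<Sum>j\<in>(UNIV::'m set). 1)"
      using that by (intro sum_mono) (auto simp: unit_cube_def)
    finally show ?thesis by simp
  qed
  then show ?thesis unfolding bounded_iff by blast
qed

definition low_height_set :: "approx_kind \<Rightarrow> (int^'n \<Rightarrow> real) \<Rightarrow> nat \<Rightarrow> (real^'m^'n) set" where
  "low_height_set k \<Psi> N =
     {X. \<forall>p q. admissible k p q \<and> approx_ineq \<Psi> X p q \<longrightarrow> qheight q \<le> real N}"

lemma low_height_set_complement:
  "- low_height_set k \<Psi> N
     = (\<Union>(p, q)\<in>{(p, q). admissible k p q \<and> real N < qheight q}. {X. approx_ineq \<Psi> X p q})"
  unfolding low_height_set_def by (auto simp: not_le) (meson not_le)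

lemma closed_low_height_set: "closed (low_height_set k \<Psi> N)"
  unfolding closed_def low_height_set_complement
  by (intro open_UN ballI) (auto intro: open_approx_ineq)

lemma approx_set_low_height: "approx_set k \<Psi> = unit_cube \<inter> (\<Inter>N. - low_height_set k \<Psi> N)"
  unfolding approx_set_unbounded low_height_set_def by (auto simp: not_le) (meson not_le)

lemma approx_set_lebesgue: "approx_set k \<Psi> \<in> sets lebesgue"
  unfolding approx_set_low_height
  by (intro sets.Int sets.countable_INT closed_sets_lebesgue open_sets_lebesgue closed_unit_cube)
     (auto simp: open_Compl closed_low_height_set)

section \<open>Porous sets are null\<close>

definition porous :: "real \<Rightarrow> 'a::metric_space set \<Rightarrow> bool" where
  "porous \<kappa> S \<longleftrightarrow> (\<forall>x\<in>S. \<forall>r>0. \<exists>d y s. 0 < d \<and> d < r \<and> \<kappa> * d \<le> s \<and>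
      ball y s \<subseteq> ball x d \<and> ball y s \<inter> S = {})"

lemma measure_ball_scaling:
  fixes a b :: "'a::euclidean_space"
  assumes "0 < r" "0 \<le> \<kappa>" "\<kappa> * r \<le> t"
  shows "\<kappa> ^ DIM('a) * measure lebesgue (ball a r) \<le> measure lebesgue (ball b t)"
proof -
  define u where "u = measure lborel (ball (0::'a) 1)"
  have "0 \<le> t" using assms by (meson less_imp_le mult_nonneg_nonneg order_trans)
  have "\<kappa> ^ DIM('a) * measure lebesgue (ball a r) = (\<kappa> * r) ^ DIM('a) * u"
    using content_ball_conv_unit_ball[of r a] assms(1) by (simp add: u_def power_mult_distrib)
  also have "\<dots> \<le> t ^ DIM('a) * u"
    using assms unfolding u_def by (intro mult_right_mono power_mono) auto
  also have "\<dots> = measure lebesgue (ball b t)"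
    using content_ball_conv_unit_ball[of t b] \<open>0 \<le> t\<close> by (simp add: u_def)
  finally show ?thesis .
qed

lemma measure_inner_balls:
  fixes a b :: "'i \<Rightarrow> 'a::euclidean_space"
  assumes C: "countable C" and disj: "disjoint_family_on (\<lambda>i. ball (a i) (r i)) C"
    and inner: "\<And>i. i \<in> C \<Longrightarrow> ball (b i) (t i) \<subseteq> ball (a i) (r i)"
    and scale: "\<And>i. i \<in> C \<Longrightarrow> 0 < r i \<and> \<kappa> * r i \<le> t i" and \<kappa>: "0 \<le> \<kappa>"
    and U: "(\<Union>i\<in>C. ball (a i) (r i)) \<in> lmeasurable"
  shows "\<kappa> ^ DIM('a) * measure lebesgue (\<Union>i\<in>C. ball (a i) (r i))
           \<le> measure lebesgue (\<Union>i\<in>C. ball (b i) (t i))"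
proof -
  define \<tau> where "\<tau> = \<kappa> ^ DIM('a)"
  have \<tau>: "0 \<le> \<tau>" using \<kappa> by (simp add: \<tau>_def)
  have disjV: "disjoint_family_on (\<lambda>i. ball (b i) (t i)) C"
    using disj inner unfolding disjoint_family_on_def by blast
  have W: "(\<Union>i\<in>C. ball (b i) (t i)) \<in> lmeasurable"
    using inner by (intro fmeasurableI2[OF U]) (auto intro: open_sets_lebesgue)
  have ball: "ennreal \<tau> * emeasure lebesgue (ball (a i) (r i)) \<le> emeasure lebesgue (ball (b i) (t i))"
    if "i \<in> C" for i
  proof -
    have "\<tau> * measure lebesgue (ball (a i) (r i)) \<le> measure lebesgue (ball (b i) (t i))"
      unfolding \<tau>_def using scale[OF that] \<kappa> by (intro measure_ball_scaling) auto
    then show ?thesis using \<tau> by (simp add: emeasure_eq_measure2 ennreal_mult[symmetric] ennreal_leI)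
  qed
  have "ennreal \<tau> * emeasure lebesgue (\<Union>i\<in>C. ball (a i) (r i))
      = (\<integral>\<^sup>+i. ennreal \<tau> * emeasure lebesgue (ball (a i) (r i)) \<partial>count_space C)"
    by (subst emeasure_UN_countable) (auto simp: C disj nn_integral_cmult)
  also have "\<dots> \<le> (\<integral>\<^sup>+i. emeasure lebesgue (ball (b i) (t i)) \<partial>count_space C)"
    by (rule nn_integral_mono) (use ball in auto)
  also have "\<dots> = emeasure lebesgue (\<Union>i\<in>C. ball (b i) (t i))"
    by (subst emeasure_UN_countable) (auto simp: C disjV)
  finally show ?thesis
    using \<tau> U W by (simp add: emeasure_eq_measure2 ennreal_mult[symmetric] \<tau>_def)
qed

lemma lmeasurable_outer_open:
  assumes S: "S \<in> lmeasurable" and e: "0 < e"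
  obtains T where "open T" "S \<subseteq> T" "T \<in> lmeasurable" "measure lebesgue T < measure lebesgue S + e"
proof -
  obtain T where T: "open T" "S \<subseteq> T" "T - S \<in> lmeasurable" "emeasure lebesgue (T - S) < ennreal e"
    using sets_lebesgue_outer_open[OF fmeasurableD[OF S] e] by blast
  have TS: "T = S \<union> (T - S)" using T(2) by auto
  have Tm: "T \<in> lmeasurable" using fmeasurable.Un[OF S T(3)] TS by simp
  have "measure lebesgue (T - S) < e"
    using T(4) emeasure_eq_measure2[OF T(3)] e by (simp add: ennreal_less_iff)
  moreover have "measure lebesgue T = measure lebesgue S + measure lebesgue (T - S)"
    using measure_Un2[OF S T(3)] TS by (metis Diff_idemp)
  ultimately show ?thesis using that T(1,2) Tm by simp
qed

lemma porous_mono: "porous \<kappa> S \<Longrightarrow> \<kappa>' \<le> \<kappa> \<Longrightarrow> 0 \<le> \<kappa>' \<Longrightarrow> porous \<kappa>' S"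
  unfolding porous_def by (meson mult_right_mono less_imp_le order_trans)

lemma porous_vitali_cover:
  fixes S :: "'a::euclidean_space set"
  assumes por: "porous \<kappa> S" and \<kappa>: "0 \<le> \<kappa>"
    and T: "open T" "S \<subseteq> T" "T \<in> lmeasurable"
  obtains U W where "U \<subseteq> T" "W \<subseteq> U" "W \<inter> S = {}" "negligible (S - U)"
    "U \<in> lmeasurable" "W \<in> lmeasurable" "\<kappa> ^ DIM('a) * measure lebesgue U \<le> measure lebesgue W"
proof -
  define cen :: "'a \<times> real \<times> 'a \<times> real \<Rightarrow> 'a" where "cen = (\<lambda>(x, d, y, s). x)"
  define rad :: "'a \<times> real \<times> 'a \<times> real \<Rightarrow> real" where "rad = (\<lambda>(x, d, y, s). d)"
  define icen :: "'a \<times> real \<times> 'a \<times> real \<Rightarrow> 'a" where "icen = (\<lambda>(x, d, y, s). y)"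
  define irad :: "'a \<times> real \<times> 'a \<times> real \<Rightarrow> real" where "irad = (\<lambda>(x, d, y, s). s)"
  define K where "K = {i. cen i \<in> S \<and> 0 < rad i \<and> \<kappa> * rad i \<le> irad i
     \<and> ball (icen i) (irad i) \<subseteq> ball (cen i) (rad i) \<and> ball (icen i) (irad i) \<inter> S = {}
     \<and> ball (cen i) (rad i) \<subseteq> T}"
  have cover: "\<exists>i. i \<in> K \<and> x \<in> ball (cen i) (rad i) \<and> rad i < e"
    if x: "x \<in> S" and e: "0 < e" for x e
  proof -
    obtain \<rho> where \<rho>: "\<rho> > 0" "ball x \<rho> \<subseteq> T" using T(1,2) x open_contains_ball by blast
    have "0 < min e \<rho>" using e \<rho>(1) by simp
    then obtain d y s where dys: "0 < d" "d < min e \<rho>" "\<kappa> * d \<le> s" "ball y s \<subseteq> ball x d"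
      "ball y s \<inter> S = {}"
      using por x unfolding porous_def by blast
    have "ball x d \<subseteq> T"
      using \<rho>(2) dys(2) by (meson min.strict_boundedE order_trans subset_ball less_imp_le)
    then have "(x, d, y, s) \<in> K" using dys x by (simp add: K_def cen_def rad_def icen_def irad_def)
    then show ?thesis using dys by (intro exI[of _ "(x, d, y, s)"]) (simp add: cen_def rad_def)
  qed
  obtain C where C: "countable C" "C \<subseteq> K"
      "pairwise (\<lambda>i j. disjnt (ball (cen i) (rad i)) (ball (cen j) (rad j))) C"
      "negligible (S - (\<Union>i\<in>C. ball (cen i) (rad i)))"
    using Vitali_covering_theorem_balls[of S K cen rad] cover by blast
  define U where "U = (\<Union>i\<in>C. ball (cen i) (rad i))"
  define W where "W = (\<Union>i\<in>C. ball (icen i) (irad i))"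
  have UT: "U \<subseteq> T" and WU: "W \<subseteq> U" and WS: "W \<inter> S = {}"
    using C(2) unfolding U_def W_def K_def by blast+
  have Um: "U \<in> lmeasurable"
    using UT unfolding U_def by (intro fmeasurableI2[OF T(3)]) (auto intro: open_sets_lebesgue)
  have Wm: "W \<in> lmeasurable"
    using WU unfolding W_def by (intro fmeasurableI2[OF Um]) (auto intro: open_sets_lebesgue)
  have ratio: "\<kappa> ^ DIM('a) * measure lebesgue U \<le> measure lebesgue W"
    unfolding U_def W_def
  proof (rule measure_inner_balls[OF C(1)])
    show "disjoint_family_on (\<lambda>i. ball (cen i) (rad i)) C"
      using C(3) unfolding disjoint_family_on_def pairwise_def disjnt_def by blast
  qed (use C(2) Um \<kappa> in \<open>auto simp: K_def U_def\<close>)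
  show ?thesis by (rule that[OF UT WU WS _ Um Wm ratio]) (use C(4) in \<open>simp add: U_def\<close>)
qed

text \<open>Lebesgue's density argument: covering S as above inside an open T of measure at most
  (1 + tau) mu(S) gives mu(S) <= mu(U - W) <= (1 - tau) mu(T), impossible if mu(S) > 0.\<close>
theorem porous_imp_negligible:
  fixes S :: "'a::euclidean_space set"
  assumes S: "S \<in> lmeasurable" and \<kappa>: "0 < \<kappa>" and por: "porous \<kappa> S"
  shows "negligible S"
proof (rule ccontr)
  assume "\<not> negligible S"
  define \<tau> where "\<tau> = min \<kappa> 1 ^ DIM('a)"
  have \<tau>: "0 < \<tau>" "\<tau> \<le> 1" using \<kappa> by (auto simp: \<tau>_def power_le_one)
  define \<mu> where "\<mu> = measure lebesgue S"
  have \<mu>: "\<mu> > 0"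
    using \<open>\<not> negligible S\<close> negligible_iff_measure0[OF S] measure_nonneg[of lebesgue S]
    unfolding \<mu>_def by linarith
  obtain T where T: "open T" "S \<subseteq> T" "T \<in> lmeasurable" "measure lebesgue T < \<mu> + \<tau> * \<mu>"
    using lmeasurable_outer_open[OF S] \<tau> \<mu> unfolding \<mu>_def by (metis mult_pos_pos)
  have "porous (min \<kappa> 1) S" "0 \<le> min \<kappa> 1" using por \<kappa> by (auto intro: porous_mono)
  then obtain U W where UW: "U \<subseteq> T" "W \<subseteq> U" "W \<inter> S = {}" "negligible (S - U)"
      "U \<in> lmeasurable" "W \<in> lmeasurable" "\<tau> * measure lebesgue U \<le> measure lebesgue W"
    unfolding \<tau>_def by (rule porous_vitali_cover[OF _ _ T(1-3)])
  have "S - U \<in> null_sets lebesgue" using UW(4) by (simp add: negligible_iff_null_sets)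
  then have "measure lebesgue ((S \<inter> U) \<union> (S - U)) = measure lebesgue (S \<inter> U)"
    using fmeasurableD[OF S] fmeasurableD[OF UW(5)] by (intro measure_Un_null_set) auto
  moreover have "(S \<inter> U) \<union> (S - U) = S" by blast
  ultimately have "\<mu> = measure lebesgue (S \<inter> U)" unfolding \<mu>_def by simp
  also have "\<dots> \<le> measure lebesgue (U - W)"
    using UW(3,5,6) fmeasurableD[OF S] by (intro measure_mono_fmeasurable) (auto intro: fmeasurable_Diff)
  also have "\<dots> = measure lebesgue U - measure lebesgue W"
    using fmeasurableD2[OF UW(5)] UW(2)
    by (intro measure_Diff[OF _ fmeasurableD[OF UW(5)] fmeasurableD[OF UW(6)]]) auto
  also have "\<dots> \<le> (1 - \<tau>) * measure lebesgue U"
    using UW(7) by (simp add: algebra_simps)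
  also have "\<dots> \<le> (1 - \<tau>) * measure lebesgue T"
    using \<tau> measure_mono_fmeasurable[OF UW(1) fmeasurableD[OF UW(5)] T(3)] by (intro mult_left_mono) auto
  also have "\<dots> \<le> (1 - \<tau>) * (\<mu> + \<tau> * \<mu>)"
    using \<tau> T(4) by (intro mult_left_mono) auto
  finally have "\<tau> * \<tau> * \<mu> \<le> 0" by (simp add: algebra_simps)
  then show False using \<tau> \<mu> by (simp add: mult_le_0_iff)
qed

section \<open>A sieve: long intervals contain integers coprime to d\<close>

lemma int_interval_count:
  assumes L: "0 \<le> L"
  shows "\<bar>real (card {k::int. a < of_int k \<and> of_int k < a + L}) - L\<bar> \<le> 1"
proof -
  have eq: "{k::int. a < of_int k \<and> of_int k < a + L} = {\<lfloor>a\<rfloor><..<\<lceil>a + L\<rceil>}"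
    by (auto simp: floor_less_iff less_ceiling_iff)
  define c where "c = \<lceil>a + L\<rceil> - (\<lfloor>a\<rfloor> + 1)"
  have card: "card {k::int. a < of_int k \<and> of_int k < a + L} = nat c"
    unfolding eq c_def by simp
  have h1: "a + L \<le> of_int \<lceil>a + L\<rceil>" by (rule le_of_int_ceiling)
  have h2: "of_int \<lfloor>a\<rfloor> \<le> a" by (rule of_int_floor_le)
  have h3: "of_int \<lceil>a + L\<rceil> < a + L + 1" using ceiling_correct[of "a + L"] by linarith
  have h4: "a < of_int \<lfloor>a\<rfloor> + 1" using floor_correct[of a] by simp
  have rc: "real_of_int c = of_int \<lceil>a + L\<rceil> - of_int \<lfloor>a\<rfloor> - 1" unfolding c_def by simp
  have c1: "real_of_int c \<ge> L - 1" using rc h1 h2 by linarith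
  have c2: "real_of_int c < L + 1" using rc h3 h4 by linarith
  show ?thesis
  proof (cases "c \<ge> 0")
    case True
    then have "real (nat c) = real_of_int c" by simp
    then show ?thesis unfolding card using c1 c2 by linarith
  next
    case False
    then have "real (nat c) = 0" by simp
    moreover have "real_of_int c < 0" using False by simp
    ultimately show ?thesis unfolding card using c1 L by linarith
  qed
qed

definition sieve_set :: "nat set \<Rightarrow> real \<Rightarrow> real \<Rightarrow> int set" where
  "sieve_set P a L = {k::int. a < of_int k \<and> of_int k < a + L \<and> (\<forall>p\<in>P. \<not> int p dvd k)}"

lemma finite_sieve_set: "finite (sieve_set P a L)"
proof -
  have "sieve_set P a L \<subseteq> {\<lfloor>a\<rfloor><..<\<lceil>a + L\<rceil>}"
    by (auto simp: sieve_set_def floor_less_iff less_ceiling_iff)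
  then show ?thesis using finite_subset by blast
qed

lemma sieve_set_multiples:
  assumes p: "prime p" "p \<notin> P" and P: "\<forall>q\<in>P. prime q"
  shows "{k \<in> sieve_set P a L. int p dvd k} = (\<lambda>j. int p * j) ` sieve_set P (a / p) (L / p)"
proof
  have p0: "real p > 0" using prime_gt_0_nat[OF p(1)] by simp
  show "{k \<in> sieve_set P a L. int p dvd k} \<subseteq> (\<lambda>j. int p * j) ` sieve_set P (a / p) (L / p)"
  proof
    fix k assume k: "k \<in> {k \<in> sieve_set P a L. int p dvd k}"
    then obtain j where j: "k = int p * j" by (auto elim: dvdE)
    have "a < real p * of_int j" "real p * of_int j < a + L" using k j by (auto simp: sieve_set_def)
    then have "a / p < of_int j" "of_int j < a / p + L / p" using p0 by (simp_all add: field_simps)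
    moreover have "\<not> int q dvd j" if "q \<in> P" for q
      using k j that by (auto simp: sieve_set_def)
    ultimately show "k \<in> (\<lambda>j. int p * j) ` sieve_set P (a / p) (L / p)"
      using j by (auto simp: sieve_set_def)
  qed
next
  have p0: "real p > 0" using prime_gt_0_nat[OF p(1)] by simp
  show "(\<lambda>j. int p * j) ` sieve_set P (a / p) (L / p) \<subseteq> {k \<in> sieve_set P a L. int p dvd k}"
  proof
    fix k assume "k \<in> (\<lambda>j. int p * j) ` sieve_set P (a / p) (L / p)"
    then obtain j where j: "j \<in> sieve_set P (a / p) (L / p)" "k = int p * j" by auto
    have "a / p < of_int j" "of_int j < a / p + L / p" using j(1) by (auto simp: sieve_set_def)
    then have b: "a < of_int k" "of_int k < a + L" using p0 j(2) by (simp_all add: field_simps)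
    have "\<not> int q dvd k" if q: "q \<in> P" for q
    proof
      assume "int q dvd k"
      then have "int q dvd int p \<or> int q dvd j"
        using P q j(2) prime_dvd_mult_iff[of "int q"] by simp
      moreover have "\<not> q dvd p" using primes_dvd_imp_eq[of q p] P q p by auto
      moreover have "\<not> int q dvd j" using j(1) q by (auto simp: sieve_set_def)
      ultimately show False by simp
    qed
    then show "k \<in> {k \<in> sieve_set P a L. int p dvd k}" using b j(2) by (auto simp: sieve_set_def)
  qed
qed

lemma card_sieve_set_insert:
  assumes p: "prime p" "p \<notin> P" and P: "\<forall>q\<in>P. prime q"
  shows "real (card (sieve_set (insert p P) a L))
           = real (card (sieve_set P a L)) - real (card (sieve_set P (a / p) (L / p)))"
proof -
  define D where "D = {k \<in> sieve_set P a L. int p dvd k}"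
  have DS: "D \<subseteq> sieve_set P a L" unfolding D_def by auto
  have "sieve_set (insert p P) a L = sieve_set P a L - D" unfolding D_def sieve_set_def by auto
  moreover have "card D = card (sieve_set P (a / p) (L / p))"
    unfolding D_def sieve_set_multiples[OF p P] using prime_gt_0_nat[OF p(1)]
    by (intro card_image) (auto simp: inj_on_def)
  moreover have "card D \<le> card (sieve_set P a L)" using DS finite_sieve_set by (rule card_mono[rotated])
  ultimately show ?thesis
    using card_Diff_subset[OF finite_subset[OF DS finite_sieve_set] DS] by (simp add: of_nat_diff)
qed

text \<open>Legendre's sieve: each further prime p subtracts the count for the window scaled by
  1/p, so the error term at most doubles.\<close>
lemma sieve_count_estimate:
  assumes "finite P" "\<forall>p\<in>P. prime p" "0 \<le> L"
  shows "\<bar>real (card (sieve_set P a L)) - L * (\<Prod>p\<in>P. 1 - 1 / real p)\<bar> \<le> 2 ^ card P"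
  using assms
proof (induction P arbitrary: a L rule: finite_induct)
  case empty
  then show ?case using int_interval_count[of L a] by (simp add: sieve_set_def)
next
  case (insert p P)
  have p: "prime p" and P: "\<forall>q\<in>P. prime q" using insert.prems by auto
  have p0: "real p > 0" using prime_gt_0_nat[OF p] by simp
  let ?\<pi> = "\<Prod>q\<in>P. 1 - 1 / real q"
  have "\<bar>real (card (sieve_set P a L)) - L * ?\<pi>\<bar> \<le> 2 ^ card P"
    using insert.IH[OF P insert.prems(2)] .
  moreover have "\<bar>real (card (sieve_set P (a / p) (L / p))) - L / p * ?\<pi>\<bar> \<le> 2 ^ card P"
    using insert.IH[OF P, of "L / p" "a / p"] insert.prems(2) p0 by simp
  moreover have "L * (\<Prod>q\<in>insert p P. 1 - 1 / real q) = L * ?\<pi> - L / p * ?\<pi>"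
    using insert.hyps by (simp add: algebra_simps)
  ultimately show ?case
    using card_sieve_set_insert[OF p insert.hyps(2) P, of a L] insert.hyps by simp
qed

text \<open>For s distinct integers >= 2, their product is at least (s+1)! and the product of
  the factors 1 - 1/x is at least 1/(s+1) (compare with 2, 3, ..., s+1).\<close>
lemma distinct_product_bounds:
  fixes A :: "nat set"
  assumes "finite A" "\<forall>x\<in>A. 2 \<le> x"
  shows "fact (card A + 1) \<le> (\<Prod>x\<in>A. real x) \<and> 1 / real (card A + 1) \<le> (\<Prod>x\<in>A. 1 - 1 / real x)"
  using assms
proof (induction "card A" arbitrary: A)
  case 0
  then have "A = {}" by simp
  then show ?case by simp
next
  case (Suc n)
  then have ne: "A \<noteq> {}" by auto
  define M where "M = Max A"
  have MA: "M \<in> A" unfolding M_def using Suc.prems ne by simp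
  define A' where "A' = A - {M}"
  have cA': "card A' = n" unfolding A'_def using Suc.hyps(2) MA Suc.prems by simp
  have IH: "fact (n + 1) \<le> (\<Prod>x\<in>A'. real x) \<and> 1 / real (n + 1) \<le> (\<Prod>x\<in>A'. 1 - 1 / real x)"
    using Suc.hyps(1)[of A'] cA' Suc.prems unfolding A'_def by auto
  have "A \<subseteq> {2..M}" unfolding M_def using Suc.prems by auto
  then have "card A \<le> card {2..M}" by (intro card_mono) auto
  then have Mge: "n + 2 \<le> M" using Suc.hyps(2) by simp
  have splitA: "A = insert M A'" "M \<notin> A'" "finite A'" unfolding A'_def using MA Suc.prems by auto
  have p1: "(\<Prod>x\<in>A. real x) = real M * (\<Prod>x\<in>A'. real x)"
    using splitA by (metis prod.insert)
  have p2: "(\<Prod>x\<in>A. 1 - 1 / real x) = (1 - 1 / real M) * (\<Prod>x\<in>A'. 1 - 1 / real x)"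
    using splitA by (metis (no_types, lifting) prod.insert)
  have f: "fact (card A + 1) = real (n + 2) * fact (n + 1)"
    using Suc.hyps(2) by (simp add: algebra_simps)
  have "real (n + 2) * fact (n + 1) \<le> real M * (\<Prod>x\<in>A'. real x)"
    using IH Mge by (intro mult_mono) auto
  moreover
  have "1 / real (card A + 1) \<le> (1 - 1 / real M) * (\<Prod>x\<in>A'. 1 - 1 / real x)"
  proof -
    have m1: "1 - 1 / real (n + 2) \<le> 1 - 1 / real M" using Mge by (simp add: frac_le)
    have "1 / real (card A + 1) = (1 - 1 / real (n + 2)) * (1 / real (n + 1))"
      using Suc.hyps(2) by (simp add: field_simps)
    also have "\<dots> \<le> (1 - 1 / real M) * (\<Prod>x\<in>A'. 1 - 1 / real x)"
      using IH m1 Mge by (intro mult_mono) auto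
    finally show ?thesis .
  qed
  ultimately show ?case using p1 p2 f by simp
qed
lemma prod_prime_factors_le:
  fixes d :: nat
  assumes d: "0 < d"
  shows "(\<Prod>p\<in>prime_factors d. real p) \<le> real d"
proof -
  have "(\<Prod>p\<in>prime_factors d. real p) \<le> (\<Prod>p\<in>prime_factors d. real (p ^ multiplicity p d))"
  proof (intro prod_mono conjI)
    fix p assume p: "p \<in> prime_factors d"
    then have pr: "prime p" and "p dvd d" by (auto intro: in_prime_factors_imp_dvd)
    then have "multiplicity p d > 0"
      using prime_multiplicity_gt_zero_iff[OF prime_imp_prime_elem[OF pr], of d] d by simp
    then have "p \<le> p ^ multiplicity p d" using prime_gt_0_nat[OF pr] by (intro self_le_power) auto
    then show "real p \<le> real (p ^ multiplicity p d)" by simp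
  qed auto
  also have "\<dots> = real (\<Prod>p\<in>prime_factors d. p ^ multiplicity p d)" by simp
  also have "\<dots> = real d" using prime_factorization_nat[OF d] by simp
  finally show ?thesis .
qed

lemma coprime_if_no_prime_factor:
  fixes d :: nat and k :: int
  assumes d: "0 < d" and k: "\<forall>p\<in>prime_factors d. \<not> int p dvd k"
  shows "coprime k (int d)"
proof (rule ccontr)
  assume "\<not> coprime k (int d)"
  then have "\<not> is_unit (gcd k (int d))" by (simp add: coprime_iff_gcd_eq_1)
  moreover have "gcd k (int d) \<noteq> 0" using d by simp
  ultimately obtain b where b: "b dvd gcd k (int d)" "prime b" using prime_divisor_exists by blast
  have b0: "b > 0" using prime_gt_0_int[OF b(2)] .
  have "b dvd int d" using b(1) by (metis dvd_trans gcd_dvd2)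
  then have "nat b dvd d" using b0 by (metis int_dvd_int_iff pos_int_cases nat_int)
  moreover have "prime (nat b)" using b(2) by simp
  ultimately have "nat b \<in> prime_factors d" using d by (intro prime_factorsI) auto
  moreover have "b dvd k" using b(1) by (metis dvd_trans gcd_dvd1)
  ultimately show False using k b0 by auto
qed

text \<open>The sieve error 2^s, weighted by s+1, is eventually dominated by any fixed multiple
  eta*(s+1)! of the factorial; for the finitely many remaining s a constant L0 suffices.\<close>
lemma sieve_error_dominated:
  fixes \<eta> :: real
  assumes \<eta>: "\<eta> > 0"
  obtains L0 where "L0 > 0" "\<And>s L. \<eta> * fact (s + 1) \<le> L \<Longrightarrow> L0 \<le> L \<Longrightarrow> real (s + 1) * 2 ^ s < L"
proof -
  have "(\<lambda>s. inverse (fact s) * (2::real) ^ s) \<longlonglongrightarrow> 0"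
    by (rule summable_LIMSEQ_zero[OF summable_exp])
  then have "eventually (\<lambda>s. inverse (fact s) * (2::real) ^ s < \<eta>) sequentially"
    using order_tendstoD(2) \<eta> by blast
  then obtain S0 where S0: "\<And>s. s \<ge> S0 \<Longrightarrow> inverse (fact s) * (2::real) ^ s < \<eta>"
    by (auto simp: eventually_sequentially)
  define L0 where "L0 = real (S0 + 1) * 2 ^ S0 + 1"
  show ?thesis
  proof (rule that)
    show "L0 > 0" unfolding L0_def by (simp add: add_pos_nonneg)
  next
    fix s :: nat and L :: real
    assume L1: "\<eta> * fact (s + 1) \<le> L" and L2: "L0 \<le> L"
    show "real (s + 1) * 2 ^ s < L"
    proof (cases "s \<ge> S0")
      case True
      have "(2::real) ^ s < \<eta> * fact s"
        using S0[OF True] by (simp add: field_simps)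
      then have "real (s + 1) * 2 ^ s < real (s + 1) * (\<eta> * fact s)"
        by (intro mult_strict_left_mono) auto
      also have "\<dots> = \<eta> * fact (s + 1)" by (simp add: algebra_simps)
      finally show ?thesis using L1 by linarith
    next
      case False
      then have "real (s + 1) * 2 ^ s \<le> real (S0 + 1) * 2 ^ S0"
        by (intro mult_mono power_increasing) auto
      then show ?thesis using L2 unfolding L0_def by linarith
    qed
  qed
qed

text \<open>With s the number of prime factors of d we have (s+1)! <= d, and the sieve leaves at least
  L/(s+1) - 2^s > 0 integers.\<close>
theorem coprime_in_long_interval:
  fixes \<eta> :: real
  assumes \<eta>: "\<eta> > 0"
  obtains L0 where "\<And>(d::nat) (a::real) L. 0 < d \<Longrightarrow> \<eta> * real d \<le> L \<Longrightarrow> L0 \<le> L \<Longrightarrow>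
      \<exists>k::int. a < of_int k \<and> of_int k < a + L \<and> coprime k (int d)"
proof -
  obtain L0 where L0: "L0 > 0" "\<And>s L. \<eta> * fact (s + 1) \<le> L \<Longrightarrow> L0 \<le> L \<Longrightarrow> real (s + 1) * 2 ^ s < L"
    using sieve_error_dominated[OF \<eta>] by blast
  show ?thesis
  proof (rule that)
    fix d :: nat and a L :: real
    assume d: "0 < d" and L1: "\<eta> * real d \<le> L" and L2: "L0 \<le> L"
    define P where "P = prime_factors d"
    define s where "s = card P"
    have finP: "finite P" and primesP: "\<forall>p\<in>P. prime p" unfolding P_def by auto
    have ge2: "\<forall>p\<in>P. 2 \<le> p" using primesP prime_ge_2_nat by blast
    have pb: "fact (s + 1) \<le> (\<Prod>p\<in>P. real p)" "1 / real (s + 1) \<le> (\<Prod>p\<in>P. 1 - 1 / real p)"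
      using distinct_product_bounds[OF finP ge2] unfolding s_def by auto
    have "\<eta> * fact (s + 1) \<le> L"
      using pb(1) prod_prime_factors_le[OF d] L1 \<eta> unfolding P_def
      by (meson mult_left_mono less_imp_le order_trans)
    then have small: "real (s + 1) * 2 ^ s < L" using L0(2) L2 by blast
    have L: "L > 0" using L0(1) L2 by linarith
    have "L / real (s + 1) \<le> L * (\<Prod>p\<in>P. 1 - 1 / real p)"
      using pb(2) L mult_left_mono[of "1 / real (s + 1)" _ L] by simp
    moreover have "2 ^ s < L / real (s + 1)" using small by (simp add: field_simps)
    moreover have "\<bar>real (card (sieve_set P a L)) - L * (\<Prod>p\<in>P. 1 - 1 / real p)\<bar> \<le> 2 ^ s"
      using sieve_count_estimate[OF finP primesP, of L a] L unfolding s_def by simp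
    ultimately have "card (sieve_set P a L) > 0" by linarith
    then obtain k :: int where k: "a < of_int k" "of_int k < a + L" "\<forall>p\<in>P. \<not> int p dvd k"
      unfolding sieve_set_def by (metis (no_types, lifting) card.empty less_irrefl Collect_empty_eq)
    then show "\<exists>k::int. a < of_int k \<and> of_int k < a + L \<and> coprime k (int d)"
      using coprime_if_no_prime_factor[OF d] unfolding P_def by blast
  qed
qed

text \<open>If (p,q) approximates x, then correcting the row of x where |q_i| is maximal gives a
  nearby exact solution y of qy + p = 0.\<close>
lemma exact_solution_nearby:
  fixes x :: "real^'m^'n"
  assumes q: "q \<noteq> 0" and ineq: "approx_ineq \<Psi> x p q"
  obtains y where "\<And>j. lin_form y p q j = 0" "dist x y \<le> real CARD('m) * \<Psi> q / qheight q"
proof -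
  have h: "qheight q > 0" using qheight_pos[OF q] .
  have fx: "\<bar>lin_form x p q j\<bar> < \<Psi> q" for j using ineq approx_ineq_iff by blast
  obtain i0 where i0: "\<bar>real_of_int (q $ i0)\<bar> = qheight q" using qheight_attained by blast
  define c where "c = real_of_int (q $ i0)"
  have c0: "c \<noteq> 0" using i0 h c_def by auto
  define y :: "real^'m^'n"
    where "y = (\<chi> i. \<chi> j. x $ i $ j - (if i = i0 then lin_form x p q j / c else 0))"
  have diff: "x $ i $ j - y $ i $ j = (if i = i0 then lin_form x p q j / c else 0)" for i j
    by (simp add: y_def)
  have "lin_form y p q j = 0" for j
  proof -
    have "lin_form x p q j - lin_form y p q j = (\<Sum>i\<in>UNIV. of_int (q $ i) * (x - y) $ i $ j)"
      by (simp add: lin_form_def algebra_simps sum_subtractf)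
    also have "\<dots> = (\<Sum>i\<in>UNIV. if i = i0 then c * (lin_form x p q j / c) else 0)"
      by (intro sum.cong) (auto simp: diff c_def)
    also have "\<dots> = lin_form x p q j" using c0 by simp
    finally show ?thesis by simp
  qed
  moreover have "dist x y \<le> real CARD('m) * \<Psi> q / qheight q"
  proof -
    have "dist x y \<le> (\<Sum>i\<in>UNIV. \<Sum>j\<in>UNIV. \<bar>(x - y) $ i $ j\<bar>)"
      unfolding dist_norm by (rule norm_le_sum_abs_entries)
    also have "\<dots> = (\<Sum>i\<in>UNIV. if i = i0 then (\<Sum>j\<in>UNIV. \<bar>lin_form x p q j / c\<bar>) else 0)"
      by (intro sum.cong) (auto simp: diff)
    also have "\<dots> = (\<Sum>j\<in>UNIV. \<bar>lin_form x p q j\<bar> / qheight q)"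
      using i0 by (simp add: c_def abs_divide)
    also have "\<dots> \<le> (\<Sum>j\<in>(UNIV::'m set). \<Psi> q / qheight q)"
      using fx h by (intro sum_mono divide_right_mono) (auto simp: less_imp_le)
    finally show ?thesis by simp
  qed
  ultimately show ?thesis using that by blast
qed

lemma approx_near_exact_solution:
  fixes Y y :: "real^'m^'n"
  assumes exact: "\<And>j. lin_form y p q j = 0" and q: "q \<noteq> 0"
    and close: "dist Y y < s" and small: "real CARD('n) * qheight q * s \<le> \<Phi> q"
  shows "approx_ineq \<Phi> Y p q"
  unfolding approx_ineq_iff
proof
  fix j
  have "lin_form Y p q j = (\<Sum>i\<in>UNIV. of_int (q $ i) * (Y - y) $ i $ j)"
    using exact[of j] by (simp add: lin_form_def algebra_simps sum_subtractf)
  then have "\<bar>lin_form Y p q j\<bar> \<le> (\<Sum>i\<in>UNIV. \<bar>real_of_int (q $ i)\<bar> * \<bar>(Y - y) $ i $ j\<bar>)"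
    by (simp add: order_trans[OF sum_abs] abs_mult)
  also have "\<dots> \<le> (\<Sum>i\<in>(UNIV::'n set). qheight q * dist Y y)"
    unfolding dist_norm
    by (intro sum_mono mult_mono) (use entry_le_norm[of "Y - y"] qheight_pos[OF q] in \<open>auto simp: qheight_ge\<close>)
  also have "\<dots> = real CARD('n) * qheight q * dist Y y" by simp
  also have "\<dots> < real CARD('n) * qheight q * s"
    using close qheight_pos[OF q] by (intro mult_strict_left_mono) auto
  finally show "\<bar>lin_form Y p q j\<bar> < \<Phi> q" using small by linarith
qed

lemma coprime_cond_if_coprime_each:
  fixes p :: "int^'m" and q :: "int^'n"
  assumes h: "\<And>j. coprime (p $ j) (Gcd (range (\<lambda>i. q $ i)))"
  shows "coprime_cond k p q"
proof (cases k)
  case Plain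
  then show ?thesis by (simp add: coprime_cond_def)
next
  case Coprime_Each
  have "Gcd (insert (p $ j) (range (\<lambda>i. q $ i))) = 1" for j
    using h[of j] by (simp add: coprime_iff_gcd_eq_1)
  then show ?thesis using Coprime_Each by (simp add: coprime_cond_def)
next
  case Coprime_All
  define G where "G = Gcd (range (\<lambda>j. p $ j) \<union> range (\<lambda>i. q $ i))"
  obtain j0 :: 'm where True by blast
  have g1: "G dvd p $ j0" unfolding G_def by (rule Gcd_dvd) auto
  have g2: "G dvd Gcd (range (\<lambda>i. q $ i))" unfolding G_def by (rule Gcd_greatest) (auto intro: Gcd_dvd)
  have "\<bar>G\<bar> = 1" using coprime_common_divisor_int[OF h[of j0] g1 g2] .
  moreover have "G \<ge> 0" unfolding G_def by simp
  ultimately have "G = 1" by simp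
  then show ?thesis using Coprime_All by (simp add: coprime_cond_def G_def)
qed

lemma admissible_approx_from_windows:
  fixes \<Phi> :: "int^'n \<Rightarrow> real" and X :: "real^'m^'n"
  assumes q: "q \<noteq> 0"
    and window: "\<And>a::real. \<exists>t::int. a < of_int t \<and> of_int t < a + 2 * \<Phi> q \<and>
        coprime t (Gcd (range (\<lambda>i. q $ i)))"
  shows "\<exists>p. admissible k p q \<and> approx_ineq \<Phi> X p q"
proof -
  define a where "a j = - (\<Sum>i\<in>UNIV. of_int (q $ i) * X $ i $ j) - \<Phi> q" for j :: 'm
  have "\<forall>j. \<exists>t::int. a j < of_int t \<and> of_int t < a j + 2 * \<Phi> q \<and> coprime t (Gcd (range (\<lambda>i. q $ i)))"
    using window by blast
  then obtain t where t: "\<And>j. a j < of_int (t j) \<and> of_int (t j) < a j + 2 * \<Phi> q \<and>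
      coprime (t j) (Gcd (range (\<lambda>i. q $ i)))"
    by metis
  define p :: "int^'m" where "p = (\<chi> j. t j)"
  have "approx_ineq \<Phi> X p q"
    unfolding approx_ineq_iff
  proof
    fix j
    have "lin_form X p q j = (\<Sum>i\<in>UNIV. of_int (q $ i) * X $ i $ j) + of_int (t j)"
      by (simp add: lin_form_def p_def)
    then show "\<bar>lin_form X p q j\<bar> < \<Phi> q" using t[of j] unfolding a_def abs_less_iff by linarith
  qed
  moreover have "coprime_cond k p q"
    by (rule coprime_cond_if_coprime_each) (use t in \<open>simp add: p_def\<close>)
  ultimately show ?thesis using q admissible_def by blast
qed

text \<open>If Phi(q) >= delta |q| for q of arbitrarily large height, then every X has admissible
  Phi-approximations of arbitrarily large height: the intervals of length 2 Phi(q) are long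
  compared to gcd(q) <= |q| and to the constant of the sieve.\<close>
lemma approx_of_large_height_if_Phi_large:
  fixes \<Phi> :: "int^'n \<Rightarrow> real" and X :: "real^'m^'n" and B :: nat
  assumes \<delta>: "\<delta> > 0" and large: "\<And>B::nat. \<exists>q. q \<noteq> 0 \<and> real B < qheight q \<and> \<delta> * qheight q \<le> \<Phi> q"
  shows "\<exists>p q. admissible k p q \<and> approx_ineq \<Phi> X p q \<and> real B < qheight q"
proof -
  obtain L0 where L0: "\<And>(d::nat) (a::real) L. 0 < d \<Longrightarrow> 2 * \<delta> * real d \<le> L \<Longrightarrow> L0 \<le> L \<Longrightarrow>
      \<exists>t::int. a < of_int t \<and> of_int t < a + L \<and> coprime t (int d)"
    using coprime_in_long_interval[of "2 * \<delta>"] \<delta> by auto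
  obtain q where q: "q \<noteq> 0" "real (B + nat \<lceil>L0 / (2 * \<delta>)\<rceil>) < qheight q" "\<delta> * qheight q \<le> \<Phi> q"
    using large by blast
  define d where "d = Gcd (range (\<lambda>i. q $ i))"
  have d: "0 < d" "real_of_int d \<le> qheight q"
    using Gcd_entries_le_qheight[OF q(1)] unfolding d_def by auto
  have "L0 / (2 * \<delta>) < qheight q" using q(2) real_nat_ceiling_ge[of "L0 / (2 * \<delta>)"] by simp
  then have "L0 \<le> 2 * \<Phi> q" using \<delta> q(3) by (simp add: field_simps)
  moreover have "\<delta> * real_of_int d \<le> \<delta> * qheight q" using d(2) \<delta> by simp
  then have "2 * \<delta> * real (nat d) \<le> 2 * \<Phi> q" using d(1) q(3) by simp
  ultimately have "\<exists>t::int. a < of_int t \<and> of_int t < a + 2 * \<Phi> q \<and> coprime t d" for a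
    using L0[of "nat d" "2 * \<Phi> q" a] d(1) by simp
  then obtain p where "admissible k p q" "approx_ineq \<Phi> X p q"
    using admissible_approx_from_windows[OF q(1)] unfolding d_def by blast
  moreover have "real B < qheight q" using q(2) by simp
  ultimately show ?thesis by blast
qed

section \<open>Shrinking Psi by a constant factor changes the approximation set by a null set\<close>

text \<open>A point approximable with Psi but not with Psi/l has Psi-approximations of arbitrarily
  large height with Psi(q)/|q| arbitrarily small: otherwise Psi(q) >= delta |q| for q of
  arbitrarily large height, and the point would be Psi/l-approximable after all.\<close>
lemma small_ratio_approx:
  fixes \<Psi> :: "int^'n \<Rightarrow> real" and x :: "real^'m^'n" and l N :: nat
  assumes x: "x \<in> approx_set k \<Psi> - approx_set k (\<lambda>q. \<Psi> q / real l)"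
    and l: "l \<ge> 1" and \<delta>: "\<delta> > 0"
  obtains p q where "admissible k p q" "approx_ineq \<Psi> x p q" "real N < qheight q"
    "\<Psi> q < \<delta> * qheight q"
proof -
  have lpos: "real l > 0" using l by simp
  have "\<not> (\<forall>B::nat. \<exists>q. q \<noteq> 0 \<and> real B < qheight q \<and> \<delta> / real l * qheight q \<le> \<Psi> q / real l)"
  proof
    assume "\<forall>B::nat. \<exists>q. q \<noteq> 0 \<and> real B < qheight q \<and> \<delta> / real l * qheight q \<le> \<Psi> q / real l"
    then have "\<exists>p q. admissible k p q \<and> approx_ineq (\<lambda>q. \<Psi> q / real l) x p q \<and> real B < qheight q"
      for B :: nat using \<delta> lpos by (intro approx_of_large_height_if_Phi_large[where \<delta>="\<delta> / real l"]) auto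
    then have "x \<in> approx_set k (\<lambda>q. \<Psi> q / real l)" using x unfolding approx_set_unbounded by blast
    with x show False by blast
  qed
  then obtain B :: nat
    where B: "\<And>q. q \<noteq> 0 \<Longrightarrow> real B < qheight q \<Longrightarrow> \<Psi> q < \<delta> * qheight q"
    using lpos by (auto simp: not_le field_simps)
  obtain p q where pq: "admissible k p q" "approx_ineq \<Psi> x p q" "real (max B N) < qheight q"
    using x unfolding approx_set_unbounded by blast
  have "q \<noteq> 0" using pq(1) by (simp add: admissible_def)
  then show ?thesis using that pq B[of q] by simp
qed

text \<open>The points approximable with Psi but not with Psi/l, whose Psi/l-approximations all have
  height at most N, form a porous set: near such x take a Psi-approximation (p,q) of height > N
  with Psi(q)/|q| small; around the nearby exact solution y, (p,q) is a Psi/l-approximation of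
  height > N on a whole ball.\<close>
lemma shrink_difference_porous:
  fixes \<Psi> :: "int^'n \<Rightarrow> real" and l N :: nat
  assumes pos: "\<And>q. \<Psi> q > 0" and l: "l \<ge> 1"
  shows "porous (1 / (real l * real CARD('n) * (real CARD('m) + 1)))
     ((approx_set k \<Psi> - approx_set k (\<lambda>q. \<Psi> q / real l)) \<inter> low_height_set k (\<lambda>q. \<Psi> q / real l) N
       :: (real^'m^'n) set)"
  (is "porous ?\<kappa> ((?A - ?Al) \<inter> ?C)")
  unfolding porous_def
proof (intro ballI allI impI)
  fix x r assume x: "x \<in> (?A - ?Al) \<inter> ?C" and r: "0 < (r::real)"
  let ?n = "real CARD('n)" and ?m = "real CARD('m)"
  have lpos: "real l > 0" using l by simp
  have "r / (?m + 1) > 0" using r by simp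
  then obtain p q where pq: "admissible k p q" "approx_ineq \<Psi> x p q" "real N < qheight q"
      "\<Psi> q < r / (?m + 1) * qheight q"
    using small_ratio_approx[of x k \<Psi> l] x l by blast
  have q: "q \<noteq> 0" using pq(1) by (simp add: admissible_def)
  have h: "qheight q > 0" using qheight_pos[OF q] .
  have small: "\<Psi> q / qheight q < r / (?m + 1)" using pq(4) h by (simp add: field_simps)
  obtain y where y: "\<And>j. lin_form y p q j = 0" "dist x y \<le> ?m * \<Psi> q / qheight q"
    using exact_solution_nearby[OF q pq(2)] by blast
  define d where "d = (?m + 1) * \<Psi> q / qheight q"
  define s where "s = \<Psi> q / (real l * ?n * qheight q)"
  have "0 < d" unfolding d_def using pos[of q] h by simp
  moreover have "d < r"
    using mult_strict_left_mono[OF small, of "?m + 1"] unfolding d_def by simp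
  moreover have "?\<kappa> * d \<le> s"
  proof -
    have "?\<kappa> * d = ((?m + 1) / (?m + 1)) * (\<Psi> q / (real l * ?n * qheight q))"
      unfolding d_def by (simp add: ac_simps)
    then show ?thesis unfolding s_def by simp
  qed
  moreover have "ball y s \<subseteq> ball x d"
  proof
    fix Y assume Y: "Y \<in> ball y s"
    have "1 \<le> l * CARD('n)" using l by simp
    then have "1 \<le> real l * ?n" by (metis of_nat_1 of_nat_le_iff of_nat_mult)
    then have "qheight q \<le> real l * ?n * qheight q" using h by simp
    then have "s \<le> \<Psi> q / qheight q" unfolding s_def using pos[of q] h by (intro frac_le) auto
    moreover have "d = ?m * \<Psi> q / qheight q + \<Psi> q / qheight q"
      unfolding d_def by (simp add: add_divide_distrib distrib_right)
    moreover have "dist x Y \<le> dist x y + dist y Y" by (rule dist_triangle)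
    moreover have "dist y Y < s" using Y by simp
    ultimately have "dist x Y < d" using y(2) by linarith
    then show "Y \<in> ball x d" by simp
  qed
  moreover have "ball y s \<inter> ((?A - ?Al) \<inter> ?C) = {}"
  proof -
    have "Y \<notin> ?C" if "Y \<in> ball y s" for Y
    proof
      have "approx_ineq (\<lambda>q. \<Psi> q / real l) Y p q"
        using that h lpos unfolding s_def
        by (intro approx_near_exact_solution[OF y(1) q]) (auto simp: dist_commute)
      moreover assume "Y \<in> ?C"
      ultimately have "qheight q \<le> real N" using pq(1) unfolding low_height_set_def by blast
      then show False using pq(3) by simp
    qed
    then show ?thesis by blast
  qed
  ultimately show "\<exists>d y s. 0 < d \<and> d < r \<and> ?\<kappa> * d \<le> s \<and> ball y s \<subseteq> ball x d \<and>
      ball y s \<inter> ((?A - ?Al) \<inter> ?C) = {}"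
    by blast
qed

lemma approx_set_shrink_negligible:
  fixes \<Psi> :: "int^'n \<Rightarrow> real" and l :: nat
  assumes pos: "\<And>q. \<Psi> q > 0" and l: "l \<ge> 1"
  shows "negligible (approx_set k \<Psi> - approx_set k (\<lambda>q. \<Psi> q / real l) :: (real^'m^'n) set)"
proof -
  define A where "A = (approx_set k \<Psi> :: (real^'m^'n) set)"
  define Al where "Al = (approx_set k (\<lambda>q. \<Psi> q / real l) :: (real^'m^'n) set)"
  define E where "E N = (A - Al) \<inter> low_height_set k (\<lambda>q. \<Psi> q / real l) N" for N
  have "A - Al = (\<Union>N. E N)"
    using approx_set_low_height[of k "\<lambda>q. \<Psi> q / real l"] unfolding E_def A_def Al_def
    by (auto simp: approx_set_def)
  moreover have "negligible (E N)" for N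
  proof (rule porous_imp_negligible)
    have "E N \<in> sets lebesgue"
      unfolding E_def A_def Al_def
      by (intro sets.Int sets.Diff approx_set_lebesgue closed_sets_lebesgue closed_low_height_set)
    moreover have "bounded (E N)"
      using bounded_unit_cube by (rule bounded_subset) (auto simp: E_def A_def approx_set_def)
    ultimately show "E N \<in> lmeasurable" by (rule bounded_set_imp_lmeasurable[rotated])
    show "0 < 1 / (real l * real CARD('n) * (real CARD('m) + 1))" using l by simp
    show "porous (1 / (real l * real CARD('n) * (real CARD('m) + 1))) (E N)"
      unfolding E_def A_def Al_def by (rule shrink_difference_porous[OF pos l])
  qed
  then have "negligible (\<Union>N. E N)" by (intro negligible_countable_Union) auto
  ultimately show ?thesis unfolding A_def Al_def by simp
qed

theorem theorem3:
  fixes \<Psi> :: "int^'n \<Rightarrow> real" and k :: approx_kind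
  assumes "\<And>q. \<Psi> q > 0"
  shows "emeasure lebesgue (\<Inter>l\<in>{1::nat..}. (approx_set k (\<lambda>q. \<Psi> q / real l) :: (real^'m^'n) set))
       = emeasure lebesgue (approx_set k \<Psi> :: (real^'m^'n) set)"
proof -
  define A where "A = (approx_set k \<Psi> :: (real^'m^'n) set)"
  define W where "W = (\<Inter>l\<in>{1::nat..}. (approx_set k (\<lambda>q. \<Psi> q / real l) :: (real^'m^'n) set))"
  have "W \<subseteq> approx_set k (\<lambda>q. \<Psi> q / real (1::nat))" unfolding W_def by (rule INT_lower) simp
  then have WA: "W \<subseteq> A" unfolding A_def by simp
  have "A - W = (\<Union>l\<in>{1::nat..}. A - approx_set k (\<lambda>q. \<Psi> q / real l))"
    unfolding W_def by blast
  moreover have "negligible (\<Union>l\<in>{1::nat..}. A - approx_set k (\<lambda>q. \<Psi> q / real l))"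
    unfolding A_def
    by (intro negligible_countable_Union countable_image) (auto intro: approx_set_shrink_negligible assms)
  ultimately have "A - W \<in> null_sets lebesgue" by (simp add: negligible_iff_null_sets)
  then have "emeasure lebesgue (A - (A - W)) = emeasure lebesgue A"
    by (rule emeasure_Diff_null_set) (simp add: A_def approx_set_lebesgue)
  moreover have "A - (A - W) = W" using WA by blast
  ultimately show ?thesis unfolding A_def W_def by simp
qed

end
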